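(* Let $r\in\mathbb{N}_0$ and $n\ge0$. The expected number $E_{n;r}$ of $r$-branches in a binary tree chosen uniformly at random among binary trees with $n$ inner nodes is \[ E_{n;r}=\frac{n+1}{\binom{2n}{n}}\sum_{\lambda\ge1}\lambda\bigg[\binom{2n}{n+1-\lambda2^r}-2\binom{2n}{n-\lambda2^r}+\binom{2n}{n-1-\lambda2^r}\bigg], \] where binomial coefficients with negative lower index are $0$.
   Context: A binary tree is either a leaf $\square$ or an inner node with an ordered pair of subtrees (left, right) which are binary trees; its size is its number of inner nodes. The register function is defined by $\mathrm{Reg}(\square)=0$, and for a tree with subtrees $t_1,t_2$: $\mathrm{Reg}(t)=\max\{\mathrm{Reg}(t_1),\mathrm{Reg}(t_2)\}$ if these differ, and $\mathrm{Reg}(t_1)+1$ otherwise. Label every node (inner node or leaf) by the register function of the subtree rooted at it. An $r$-branch is a maximal chain of nodes labeled $r$, i.e. a connected component (with respect to parent–child edges) of the set of nodes labeled $r$. *)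

theory Defs
  imports Complex_Main
begin

datatype bt = Leaf | Node bt bt

fun inner :: "bt \<Rightarrow> nat" where
  "inner Leaf = 0"
| "inner (Node l r) = inner l + inner r + 1"

fun reg :: "bt \<Rightarrow> nat" where
  "reg Leaf = 0"
| "reg (Node t1 t2) = (if reg t1 \<noteq> reg t2 then max (reg t1) (reg t2) else reg t1 + 1)"

text \<open>Nodes (inner nodes and leaves) are addressed by their path from the root
  (False = go left, True = go right).\<close>
fun subtree_at :: "bt \<Rightarrow> bool list \<Rightarrow> bt option" where
  "subtree_at t [] = Some t"
| "subtree_at Leaf (_ # _) = None"
| "subtree_at (Node l r) (b # p) = subtree_at (if b then r else l) p"

definition nodes :: "bt \<Rightarrow> bool list set" where
  "nodes t = {p. subtree_at t p \<noteq> None}"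

definition label :: "bt \<Rightarrow> bool list \<Rightarrow> nat" where
  "label t p = reg (the (subtree_at t p))"

definition rnodes :: "bt \<Rightarrow> nat \<Rightarrow> bool list set" where
  "rnodes t r = {p \<in> nodes t. label t p = r}"

definition branch_edge :: "bt \<Rightarrow> nat \<Rightarrow> (bool list \<times> bool list) set" where
  "branch_edge t r = {(p, q). p \<in> rnodes t r \<and> q \<in> rnodes t r \<and>
                         (\<exists>b. q = p @ [b] \<or> p = q @ [b])}"

text \<open>r-branches: connected components of the set of nodes labelled r.\<close>
definition branches :: "bt \<Rightarrow> nat \<Rightarrow> bool list set set" where
  "branches t r = rnodes t r // ((branch_edge t r)\<^sup>*)"

definition num_branches :: "bt \<Rightarrow> nat \<Rightarrow> nat" where
  "num_branches t r = card (branches t r)"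

definition trees_of_size :: "nat \<Rightarrow> bt set" where
  "trees_of_size n = {t. inner t = n}"

definition expected_branches :: "nat \<Rightarrow> nat \<Rightarrow> real" where
  "expected_branches n r =
     (\<Sum>t\<in>trees_of_size n. real (num_branches t r)) / real (card (trees_of_size n))"

definition binomi :: "nat \<Rightarrow> int \<Rightarrow> int" where
  "binomi m k = (if k < 0 then 0 else int (m choose nat k))"

end

theory Submission
  imports Defs "HOL-Computational_Algebra.Formal_Power_Series"
begin

text \<open>Each \<open>r\<close>-branch has a unique topmost node, and counting branches at their lowest nodes gives
  a recursion over the tree. Summed over all trees of size \<open>n\<close>, this becomes a coefficient of a
  generating function in \<open>z\<close>. Writing \<open>z = U / (1 + U)\<^sup>2\<close>, where \<open>1 + U\<close> is the Catalan series,
  the generating functions of trees by register become rational in \<open>U\<close>, and the branch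
  generating function is \<open>(1 - U\<^sup>2) U^(2^r - 1) / (1 - U^2^r)\<^sup>2 = \<Sum>\<^sub>l\<^sub>\<ge>\<^sub>1 l (U^(l 2^r - 1) - U^(l 2^r + 1))\<close>.
  Since \<open>[z^n] U^k = C(2n - 1, n - k) - C(2n - 1, n - k - 1)\<close>, reading off the coefficient and
  dividing by the Catalan number gives the formula.\<close>

unbundle fps_syntax

lemma trees_of_size_0: "trees_of_size 0 = {Leaf}"
  unfolding trees_of_size_def by (auto elim: inner.elims)

lemma trees_of_size_Suc:
  "trees_of_size (Suc n) =
     (\<lambda>(a, b). Node a b) ` (\<Union>i\<le>n. trees_of_size i \<times> trees_of_size (n - i))"
proof
  show "trees_of_size (Suc n) \<subseteq> (\<lambda>(a, b). Node a b) ` (\<Union>i\<le>n. trees_of_size i \<times> trees_of_size (n - i))"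
  proof
    fix t assume "t \<in> trees_of_size (Suc n)"
    then obtain a b where "t = Node a b" "inner a + inner b = n"
      unfolding trees_of_size_def by (cases t) auto
    then show "t \<in> (\<lambda>(a, b). Node a b) ` (\<Union>i\<le>n. trees_of_size i \<times> trees_of_size (n - i))"
      unfolding trees_of_size_def by force
  qed
qed (auto simp: trees_of_size_def)

lemma finite_trees_of_size: "finite (trees_of_size n)"
proof (induction n rule: less_induct)
  case (less n)
  then show ?case
    by (cases n) (auto simp: trees_of_size_0 trees_of_size_Suc)
qed

lemma sum_trees_of_size_Suc:
  "(\<Sum>t\<in>trees_of_size (Suc n). w t) =
     (\<Sum>i\<le>n. \<Sum>a\<in>trees_of_size i. \<Sum>b\<in>trees_of_size (n - i). w (Node a b))"
proof -
  have inj: "inj_on (\<lambda>(a, b). Node a b) X" for X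
    by (auto simp: inj_on_def)
  have disjoint: "i \<noteq> j \<Longrightarrow> (trees_of_size i \<times> trees_of_size (n - i)) \<inter>
                                 (trees_of_size j \<times> trees_of_size (n - j)) = {}" for i j
    by (auto simp: trees_of_size_def)
  show ?thesis
    unfolding trees_of_size_Suc sum.reindex[OF inj]
    by (subst sum.UNION_disjoint)
       (auto simp: finite_trees_of_size disjoint sum.cartesian_product split_def)
qed

section \<open>Generating functions of weighted trees\<close>

definition tree_gf :: "(bt \<Rightarrow> 'a::comm_semiring_1) \<Rightarrow> 'a fps" where
  "tree_gf w = Abs_fps (\<lambda>n. \<Sum>t\<in>trees_of_size n. w t)"

definition pair_gf :: "(bt \<Rightarrow> bt \<Rightarrow> 'a::comm_semiring_1) \<Rightarrow> 'a fps" where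
  "pair_gf F = Abs_fps (\<lambda>n. \<Sum>i\<le>n. \<Sum>a\<in>trees_of_size i. \<Sum>b\<in>trees_of_size (n - i). F a b)"

lemma tree_gf_nth [simp]: "tree_gf w $ n = (\<Sum>t\<in>trees_of_size n. w t)"
  by (simp add: tree_gf_def)

lemma pair_gf_nth [simp]:
  "pair_gf F $ n = (\<Sum>i\<le>n. \<Sum>a\<in>trees_of_size i. \<Sum>b\<in>trees_of_size (n - i). F a b)"
  by (simp add: pair_gf_def)

lemma tree_gf_recursion:
  "tree_gf w = fps_const (w Leaf) + fps_X * pair_gf (\<lambda>a b. w (Node a b))"
proof (rule fps_ext)
  fix n
  show "tree_gf w $ n = (fps_const (w Leaf) + fps_X * pair_gf (\<lambda>a b. w (Node a b))) $ n"
    by (cases n) (simp_all add: trees_of_size_0 sum_trees_of_size_Suc)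
qed

lemma pair_gf_add: "pair_gf (\<lambda>a b. F a b + G a b) = pair_gf F + pair_gf G"
  by (simp add: fps_eq_iff sum.distrib)

lemma pair_gf_mult: "pair_gf (\<lambda>a b. f a * g b) = tree_gf f * tree_gf g"
  by (simp add: fps_eq_iff fps_mult_nth atLeast0AtMost sum_product)

lemma tree_gf_add: "tree_gf (\<lambda>t. f t + g t) = tree_gf f + tree_gf g"
  by (simp add: fps_eq_iff sum.distrib)

section \<open>Branches and their topmost nodes\<close>

definition branch_tops :: "bt \<Rightarrow> nat \<Rightarrow> bool list set" where
  "branch_tops t r = {p \<in> rnodes t r. p = [] \<or> butlast p \<notin> rnodes t r}"

function climb :: "bool list set \<Rightarrow> bool list \<Rightarrow> bool list" where
  "climb S p = (if p \<noteq> [] \<and> butlast p \<in> S then climb S (butlast p) else p)"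
  by auto
termination by (relation "measure (\<lambda>(S, p). length p)") auto

declare climb.simps [simp del]

lemma climb_top:
  "p \<in> S \<Longrightarrow> climb S p \<in> S \<and> (climb S p = [] \<or> butlast (climb S p) \<notin> S)"
proof (induction S p rule: climb.induct)
  case (1 S p)
  then show ?case
    by (cases "p \<noteq> [] \<and> butlast p \<in> S") (simp_all add: climb.simps[of S p])
qed

lemma climb_at_top: "p = [] \<or> butlast p \<notin> S \<Longrightarrow> climb S p = p"
  by (subst climb.simps) auto

lemma climb_snoc: "p \<in> S \<Longrightarrow> climb S (p @ [b]) = climb S p"
  by (subst climb.simps) simp

lemma sym_branch_edge: "sym (branch_edge t r)"
  unfolding branch_edge_def sym_def by auto

lemma climb_in_branch:
  "p \<in> rnodes t r \<Longrightarrow> (p, climb (rnodes t r) p) \<in> (branch_edge t r)\<^sup>*"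
proof (induction "rnodes t r" p rule: climb.induct)
  case (1 p)
  show ?case
  proof (cases "p \<noteq> [] \<and> butlast p \<in> rnodes t r")
    case True
    then have "(p, butlast p) \<in> branch_edge t r"
      using "1.prems" unfolding branch_edge_def
      by (auto intro!: exI[of _ "last p"] simp: append_butlast_last_id)
    with 1 True show ?thesis
      by (subst climb.simps) (auto intro: converse_rtrancl_into_rtrancl)
  next
    case False
    then show ?thesis by (subst climb.simps) auto
  qed
qed

lemma climb_branch_edge_rtrancl:
  "(p, q) \<in> (branch_edge t r)\<^sup>* \<Longrightarrow> climb (rnodes t r) p = climb (rnodes t r) q"
  by (induction rule: rtrancl_induct) (auto simp: branch_edge_def climb_snoc)

lemma num_branches_eq_card_branch_tops: "num_branches t r = card (branch_tops t r)"
proof -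
  let ?E = "(branch_edge t r)\<^sup>*" and ?S = "rnodes t r"
  have "bij_betw (\<lambda>q. ?E `` {q}) (branch_tops t r) (branches t r)"
  proof (rule bij_betw_imageI)
    show "inj_on (\<lambda>q. ?E `` {q}) (branch_tops t r)"
    proof (rule inj_onI)
      fix q1 q2
      assume q: "q1 \<in> branch_tops t r" "q2 \<in> branch_tops t r" "?E `` {q1} = ?E `` {q2}"
      then have "climb ?S q1 = climb ?S q2"
        by (intro climb_branch_edge_rtrancl) blast
      with q(1,2) show "q1 = q2"
        using climb_at_top unfolding branch_tops_def by fastforce
    qed
    show "(\<lambda>q. ?E `` {q}) ` branch_tops t r = branches t r"
    proof
      show "(\<lambda>q. ?E `` {q}) ` branch_tops t r \<subseteq> branches t r"
        unfolding branches_def branch_tops_def by (auto intro: quotientI)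
      show "branches t r \<subseteq> (\<lambda>q. ?E `` {q}) ` branch_tops t r"
      proof
        fix X assume "X \<in> branches t r"
        then obtain p where p: "p \<in> ?S" "X = ?E `` {p}"
          unfolding branches_def quotient_def by blast
        have "climb ?S p \<in> branch_tops t r"
          using climb_top[OF p(1)] unfolding branch_tops_def by auto
        moreover have "?E `` {p} = ?E `` {climb ?S p}"
          using climb_in_branch[OF p(1)] sym_rtrancl[OF sym_branch_edge]
          by (auto dest: symD intro: rtrancl_trans)
        ultimately show "X \<in> (\<lambda>q. ?E `` {q}) ` branch_tops t r"
          using p(2) by blast
      qed
    qed
  qed
  then show ?thesis
    unfolding num_branches_def by (simp add: bij_betw_same_card)
qed

lemma nodes_Leaf: "nodes Leaf = {[]}"
  unfolding nodes_def by (auto elim: subtree_at.elims)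

lemma nodes_Node: "nodes (Node a b) = insert [] (Cons False ` nodes a \<union> Cons True ` nodes b)"
proof -
  have "p \<in> nodes (Node a b) \<longleftrightarrow> p \<in> insert [] (Cons False ` nodes a \<union> Cons True ` nodes b)" for p
    unfolding nodes_def by (cases p) auto
  then show ?thesis by blast
qed

lemma finite_nodes: "finite (nodes t)"
  by (induction t) (auto simp: nodes_Leaf nodes_Node)

lemma finite_branch_tops: "finite (branch_tops t r)"
  using finite_nodes[of t] unfolding branch_tops_def rnodes_def by auto

lemma Nil_in_rnodes_iff: "[] \<in> rnodes t r \<longleftrightarrow> reg t = r"
  unfolding rnodes_def nodes_def label_def by auto

lemma Cons_in_rnodes_iff: "x # p \<in> rnodes (Node a b) r \<longleftrightarrow> p \<in> rnodes (if x then b else a) r"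
  unfolding rnodes_def nodes_def label_def by auto

lemma Nil_in_branch_tops_iff: "[] \<in> branch_tops t r \<longleftrightarrow> reg t = r"
  unfolding branch_tops_def by (simp add: Nil_in_rnodes_iff)

lemma branch_tops_Node:
  "branch_tops (Node a b) r = {p. p = [] \<and> reg (Node a b) = r}
     \<union> Cons False ` (branch_tops a r - {p. p = [] \<and> reg (Node a b) = r})
     \<union> Cons True ` (branch_tops b r - {p. p = [] \<and> reg (Node a b) = r})"
  (is "_ = ?R")
proof -
  have "p \<in> branch_tops (Node a b) r \<longleftrightarrow> p \<in> ?R" for p
  proof (cases p)
    case Nil
    then show ?thesis by (auto simp: Nil_in_branch_tops_iff simp del: reg.simps)
  next
    case (Cons x q)
    then show ?thesis
      by (cases x; cases q)
         (auto simp: branch_tops_def Cons_in_rnodes_iff Nil_in_rnodes_iff simp del: reg.simps)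
  qed
  then show ?thesis by blast
qed

lemma card_branch_tops_Node:
  "card (branch_tops (Node a b) r) = of_bool (reg (Node a b) = r)
     + (card (branch_tops a r) - of_bool (reg (Node a b) = r \<and> reg a = r))
     + (card (branch_tops b r) - of_bool (reg (Node a b) = r \<and> reg b = r))"
proof -
  let ?Z = "{p::bool list. p = [] \<and> reg (Node a b) = r}"
  have finite_Z: "finite ?Z"
    by (rule finite_subset[of _ "{[]}"]) auto
  have card_diff: "card (branch_tops c r - ?Z) =
      card (branch_tops c r) - of_bool (reg (Node a b) = r \<and> reg c = r)" for c
  proof -
    have "branch_tops c r \<inter> ?Z = (if reg (Node a b) = r \<and> reg c = r then {[]} else {})"
      using Nil_in_branch_tops_iff[of c r] by (auto simp del: reg.simps)
    then show ?thesis
      using card_Diff_subset_Int[of "branch_tops c r" ?Z] finite_Z by (simp del: reg.simps)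
  qed
  have card_Cons: "card (Cons x ` (branch_tops c r - ?Z)) = card (branch_tops c r - ?Z)" for x c
    by (rule card_image) (simp add: inj_on_def)
  have "card (branch_tops (Node a b) r) = card ?Z
      + card (Cons False ` (branch_tops a r - ?Z)) + card (Cons True ` (branch_tops b r - ?Z))"
    unfolding branch_tops_Node
    by (subst card_Un_disjoint; (subst card_Un_disjoint)?) (auto simp: finite_Z finite_branch_tops)
  also have "card ?Z = of_bool (reg (Node a b) = r)"
    by (cases "reg (Node a b) = r") auto
  finally show ?thesis
    unfolding card_Cons card_diff .
qed

text \<open>Each \<open>r\<close>-branch is a path whose lowest node is a leaf (if \<open>r = 0\<close>) or a node whose
  children both have register \<open>r - 1\<close>; counting these lowest nodes gives a simple recursion.\<close>

fun branch_count :: "nat \<Rightarrow> bt \<Rightarrow> nat" where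
  "branch_count r Leaf = of_bool (r = 0)"
| "branch_count r (Node a b) =
     branch_count r a + branch_count r b + of_bool (reg a = reg b \<and> Suc (reg a) = r)"

lemma num_branches_eq_branch_count: "num_branches t r = branch_count r t"
  unfolding num_branches_eq_card_branch_tops
proof (induction t)
  case Leaf
  have "branch_tops Leaf r = (if r = 0 then {[]} else {})"
    unfolding branch_tops_def rnodes_def nodes_Leaf label_def by auto
  then show ?case by simp
next
  case (Node a b)
  have root_top: "of_bool (reg c = r) \<le> card (branch_tops c r)" for c
  proof (cases "reg c = r")
    case True
    then have "[] \<in> branch_tops c r"
      by (simp add: Nil_in_branch_tops_iff)
    then have "card (branch_tops c r) > 0"
      using finite_branch_tops card_gt_0_iff by blast
    with True show ?thesis by simp
  qed simp
  show ?case
  proof (cases "reg a = reg b")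
    case True
    then show ?thesis
      using Node.IH by (simp add: card_branch_tops_Node)
  next
    case False
    then show ?thesis
      using Node.IH root_top[of a] root_top[of b]
      by (simp add: card_branch_tops_Node max_def)
  qed
qed

section \<open>The generating functions in terms of \<open>U\<close>\<close>

definition U :: "int fps" where
  "U = tree_gf (\<lambda>_. 1) - 1"

definition reg_eq_gf :: "nat \<Rightarrow> int fps" where
  "reg_eq_gf p = tree_gf (\<lambda>t. of_bool (reg t = p))"

definition reg_le_gf :: "nat \<Rightarrow> int fps" where
  "reg_le_gf p = tree_gf (\<lambda>t. of_bool (reg t \<le> p))"

definition branches_gf :: "nat \<Rightarrow> int fps" where
  "branches_gf r = tree_gf (\<lambda>t. int (branch_count r t))"

lemma tree_gf_one: "tree_gf (\<lambda>_. 1) = 1 + U"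
  by (simp add: U_def)

lemma U_nth_0: "U $ 0 = 0"
  by (simp add: U_def trees_of_size_0)

lemma U_fixpoint: "fps_X * (1 + U)\<^sup>2 = U"
proof -
  have "tree_gf (\<lambda>_. 1::int) = 1 + fps_X * (tree_gf (\<lambda>_. 1) * tree_gf (\<lambda>_. 1))"
    by (subst tree_gf_recursion) (simp add: pair_gf_mult[where f = "\<lambda>_. 1" and g = "\<lambda>_. 1", simplified])
  then show ?thesis
    unfolding tree_gf_one by (simp add: power2_eq_square algebra_simps)
qed

lemma one_minus_U_cancel: "(1 - U) * (x - y) = 0 \<Longrightarrow> x = y"
proof -
  have "1 - U \<noteq> 0"
    using U_nth_0 by (auto simp: fps_eq_iff dest: spec[of _ 0])
  then show "(1 - U) * (x - y) = 0 \<Longrightarrow> x = y" by simp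
qed

lemma reg_eq_gf_0: "reg_eq_gf 0 = 1"
proof -
  have "(\<lambda>a b. of_bool (reg (Node a b) = 0)) = (\<lambda>a b. 0::int)"
    by (auto simp: fun_eq_iff max_def)
  then show ?thesis
    unfolding reg_eq_gf_def by (subst tree_gf_recursion) (simp add: fps_eq_iff)
qed

lemma reg_eq_gf_Suc:
  "reg_eq_gf (Suc p) = fps_X * (reg_eq_gf p * reg_eq_gf p
     + reg_eq_gf (Suc p) * reg_le_gf p + reg_le_gf p * reg_eq_gf (Suc p))"
proof -
  have "(\<lambda>a b. of_bool (reg (Node a b) = Suc p)) = (\<lambda>a b.
      of_bool (reg a = p) * of_bool (reg b = p) + of_bool (reg a = Suc p) * of_bool (reg b \<le> p)
      + of_bool (reg a \<le> p) * of_bool (reg b = Suc p) :: int)"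
    by (auto simp: fun_eq_iff max_def)
  then show ?thesis
    unfolding reg_eq_gf_def reg_le_gf_def
    by (subst tree_gf_recursion) (simp add: pair_gf_add pair_gf_mult)
qed

lemma reg_le_gf_0: "reg_le_gf 0 = 1"
  using reg_eq_gf_0 by (simp add: reg_eq_gf_def reg_le_gf_def)

lemma reg_le_gf_Suc: "reg_le_gf (Suc p) = reg_le_gf p + reg_eq_gf (Suc p)"
proof -
  have "(\<lambda>t. of_bool (reg t \<le> Suc p)) = (\<lambda>t. of_bool (reg t \<le> p) + of_bool (reg t = Suc p) :: int)"
    by (auto simp: fun_eq_iff)
  then show ?thesis
    unfolding reg_eq_gf_def reg_le_gf_def by (simp add: tree_gf_add)
qed

lemma branches_gf_0: "branches_gf 0 = 1 + fps_X * (branches_gf 0 * (1 + U) + (1 + U) * branches_gf 0)"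
proof -
  have "(\<lambda>a b. int (branch_count 0 (Node a b))) =
      (\<lambda>a b. int (branch_count 0 a) * 1 + 1 * int (branch_count 0 b))"
    by (auto simp: fun_eq_iff)
  then show ?thesis
    unfolding branches_gf_def
    by (subst tree_gf_recursion, simp only: pair_gf_add pair_gf_mult) (simp add: tree_gf_one)
qed

lemma branches_gf_Suc:
  "branches_gf (Suc q) = fps_X * (branches_gf (Suc q) * (1 + U) + (1 + U) * branches_gf (Suc q)
     + reg_eq_gf q * reg_eq_gf q)"
proof -
  have "(\<lambda>a b. int (branch_count (Suc q) (Node a b))) =
      (\<lambda>a b. int (branch_count (Suc q) a) * 1 + 1 * int (branch_count (Suc q) b)
        + of_bool (reg a = q) * of_bool (reg b = q))"
    by (auto simp: fun_eq_iff)
  then show ?thesis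
    unfolding branches_gf_def reg_eq_gf_def
    by (subst tree_gf_recursion, simp only: pair_gf_add pair_gf_mult) (simp add: tree_gf_one)
qed

text \<open>The induction step from \<open>v = U^(2^p - 1)\<close> to \<open>U * v\<^sup>2 = U^(2^(p+1) - 1)\<close>: each conclusion,
  multiplied by \<open>1 - u\<close>, is an explicit linear combination of the hypotheses.\<close>

lemma reg_eq_closed_form_step:
  fixes R L R' X u v :: "'a::comm_ring_1"
  assumes R: "R * (1 - (u*v)\<^sup>2) = (1 - u\<^sup>2) * v"
    and L: "L * (1 - (u*v)\<^sup>2) = (1 + u) * (1 - u*v\<^sup>2)"
    and R': "R' = X * (R*R + R'*L + L*R')"
    and X: "X * (1 + u)\<^sup>2 = u"
  shows "(1 - u) * (R' * (1 - (u*(u*v\<^sup>2))\<^sup>2) - (1 - u\<^sup>2) * (u*v\<^sup>2)) = 0"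
proof -
  have "(1 - u) * (R' * (1 - (u*(u*v\<^sup>2))\<^sup>2) - (1 - u\<^sup>2) * (u*v\<^sup>2)) =
      (1+u) * (1 - (u*v)\<^sup>2)\<^sup>2 * (R' - X * (R*R + R'*L + L*R'))
    + X * (1+u) * (R * (1 - (u*v)\<^sup>2) + (1 - u\<^sup>2) * v) * (R * (1 - (u*v)\<^sup>2) - (1 - u\<^sup>2) * v)
    + ((1+u) * (1-u)\<^sup>2 * v\<^sup>2 + 2 * (1 - (u*v)\<^sup>2) * R' * (1 - u*v\<^sup>2)) * (X * (1+u)\<^sup>2 - u)
    + 2 * X * (1+u) * (1 - (u*v)\<^sup>2) * R' * (L * (1 - (u*v)\<^sup>2) - (1+u) * (1 - u*v\<^sup>2))"
    by (simp add: algebra_simps power2_eq_square)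
  also have "\<dots> = 0"
    using assms by simp
  finally show ?thesis .
qed

lemma reg_le_closed_form_step:
  fixes L R' u v :: "'a::comm_ring_1"
  assumes L: "L * (1 - (u*v)\<^sup>2) = (1 + u) * (1 - u*v\<^sup>2)"
    and R': "R' * (1 - (u*(u*v\<^sup>2))\<^sup>2) = (1 - u\<^sup>2) * (u*v\<^sup>2)"
  shows "(L + R') * (1 - (u*(u*v\<^sup>2))\<^sup>2) = (1 + u) * (1 - u*(u*v\<^sup>2)\<^sup>2)"
proof -
  have "(L + R') * (1 - (u*(u*v\<^sup>2))\<^sup>2) =
      L * (1 - (u*v)\<^sup>2) * (1 + (u*v)\<^sup>2) + R' * (1 - (u*(u*v\<^sup>2))\<^sup>2)"
    by (simp add: algebra_simps power2_eq_square)
  also have "\<dots> = (1 + u) * (1 - u*(u*v\<^sup>2)\<^sup>2)"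
    unfolding L R' by (simp add: algebra_simps power2_eq_square)
  finally show ?thesis .
qed

lemma branches_closed_form_step:
  fixes B R X u v :: "'a::comm_ring_1"
  assumes R: "R * (1 - (u*v)\<^sup>2) = (1 - u\<^sup>2) * v"
    and B: "B = X * (B * (1 + u) + (1 + u) * B + R*R)"
    and X: "X * (1 + u)\<^sup>2 = u"
  shows "(1 - u) * (B * (1 - (u*v)\<^sup>2)\<^sup>2 - (1 - u\<^sup>2) * (u*v\<^sup>2)) = 0"
proof -
  have "(1 - u) * (B * (1 - (u*v)\<^sup>2)\<^sup>2 - (1 - u\<^sup>2) * (u*v\<^sup>2)) =
      (1+u) * (1 - (u*v)\<^sup>2)\<^sup>2 * (B - X * (B * (1+u) + (1+u) * B + R*R))
    + 2 * (1 - (u*v)\<^sup>2)\<^sup>2 * B * (X * (1+u)\<^sup>2 - u)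
    + X * (1+u) * (R * (1 - (u*v)\<^sup>2) + (1 - u\<^sup>2) * v) * (R * (1 - (u*v)\<^sup>2) - (1 - u\<^sup>2) * v)
    + (1+u) * (1-u)\<^sup>2 * v\<^sup>2 * (X * (1+u)\<^sup>2 - u)"
    by (simp add: algebra_simps power2_eq_square)
  also have "\<dots> = 0"
    using assms by simp
  finally show ?thesis .
qed

lemma power_two_power_eq:
  fixes x :: "'a::monoid_mult"
  shows "x ^ 2 ^ p = x * x ^ (2 ^ p - 1)"
    and "x ^ 2 ^ Suc p = (x ^ 2 ^ p)\<^sup>2"
    and "x ^ (2 ^ Suc p - 1) = x * (x ^ (2 ^ p - 1))\<^sup>2"
proof -
  obtain s where s: "2 ^ p = Suc s"
    using not0_implies_Suc[of "2 ^ p"] by auto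
  show "x ^ 2 ^ p = x * x ^ (2 ^ p - 1)"
    by (simp add: s)
  show "x ^ 2 ^ Suc p = (x ^ 2 ^ p)\<^sup>2"
    by (simp add: power_even_eq)
  have "2 ^ Suc p - 1 = Suc (2 * s)"
    using s by simp
  then show "x ^ (2 ^ Suc p - 1) = x * (x ^ (2 ^ p - 1))\<^sup>2"
    by (simp add: s power_even_eq)
qed

lemma reg_gf_closed_forms:
  "reg_eq_gf p * (1 - U ^ 2 ^ Suc p) = (1 - U\<^sup>2) * U ^ (2 ^ p - 1) \<and>
   reg_le_gf p * (1 - U ^ 2 ^ Suc p) = (1 + U) * (1 - U ^ (2 ^ Suc p - 1))"
proof (induction p)
  case 0
  then show ?case
    by (simp add: reg_eq_gf_0 reg_le_gf_0 algebra_simps power2_eq_square)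
next
  case (Suc p)
  define v where "v = U ^ (2 ^ p - 1)"
  have U_Suc: "U ^ 2 ^ Suc p = (U*v)\<^sup>2" and U_Suc_minus_1: "U ^ (2 ^ Suc p - 1) = U * v\<^sup>2"
    unfolding v_def power_two_power_eq(2,3) power_two_power_eq(1)[of U p] by simp_all
  have R: "reg_eq_gf p * (1 - (U*v)\<^sup>2) = (1 - U\<^sup>2) * v"
    and L: "reg_le_gf p * (1 - (U*v)\<^sup>2) = (1 + U) * (1 - U*v\<^sup>2)"
    using Suc.IH unfolding U_Suc U_Suc_minus_1 v_def by simp_all
  have R': "reg_eq_gf (Suc p) * (1 - (U*(U*v\<^sup>2))\<^sup>2) = (1 - U\<^sup>2) * (U*v\<^sup>2)"
    by (rule one_minus_U_cancel, rule reg_eq_closed_form_step[OF R L reg_eq_gf_Suc U_fixpoint])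
  have "U ^ 2 ^ Suc (Suc p) = (U*(U*v\<^sup>2))\<^sup>2" "U ^ (2 ^ Suc (Suc p) - 1) = U*(U*v\<^sup>2)\<^sup>2"
    unfolding power_two_power_eq(2,3)[of U "Suc p"] power_two_power_eq(1)[of U "Suc p"] U_Suc_minus_1
    by simp_all
  then show ?case
    unfolding U_Suc_minus_1 reg_le_gf_Suc using R' reg_le_closed_form_step[OF L R'] by simp
qed

lemma branches_gf_closed_form:
  "branches_gf r * (1 - U ^ 2 ^ r)\<^sup>2 = (1 - U\<^sup>2) * U ^ (2 ^ r - 1)"
proof (cases r)
  case 0
  let ?B = "branches_gf 0"
  have "?B * (1 - U)\<^sup>2 - (1 - U\<^sup>2) =
     (1 - U) * ((1+U) * (?B - (1 + fps_X * (?B * (1+U) + (1+U) * ?B))) + 2 * ?B * (fps_X * (1+U)\<^sup>2 - U))"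
    by (simp add: algebra_simps power2_eq_square)
  also have "\<dots> = 0"
    using branches_gf_0 U_fixpoint by simp
  finally show ?thesis
    using 0 by simp
next
  case (Suc q)
  define v where "v = U ^ (2 ^ q - 1)"
  have U_Suc: "U ^ 2 ^ Suc q = (U*v)\<^sup>2" and U_Suc_minus_1: "U ^ (2 ^ Suc q - 1) = U * v\<^sup>2"
    unfolding v_def power_two_power_eq(2,3) power_two_power_eq(1)[of U q] by simp_all
  have R: "reg_eq_gf q * (1 - (U*v)\<^sup>2) = (1 - U\<^sup>2) * v"
    using reg_gf_closed_forms[of q] unfolding U_Suc v_def by simp
  have "branches_gf (Suc q) * (1 - (U*v)\<^sup>2)\<^sup>2 = (1 - U\<^sup>2) * (U*v\<^sup>2)"
    by (rule one_minus_U_cancel, rule branches_closed_form_step[OF R branches_gf_Suc U_fixpoint])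
  then show ?thesis
    unfolding Suc U_Suc U_Suc_minus_1 .
qed

section \<open>Coefficients of powers of \<open>U\<close>\<close>

lemma binomi_Suc: "binomi (Suc m) j = binomi m (j - 1) + binomi m j"
proof (cases "j \<le> 0")
  case False
  then have "nat j = Suc (nat (j - 1))"
    by simp
  with False show ?thesis
    by (simp add: binomi_def)
qed (auto simp: binomi_def)

fun ballot :: "nat \<Rightarrow> nat \<Rightarrow> int" where
  "ballot k 0 = of_bool (k = 0)"
| "ballot k (Suc n) = binomi (Suc (2 * n)) (int n + 1 - int k) - binomi (Suc (2 * n)) (int n - int k)"

lemma ballot_Suc_eq: "int n - int k = a \<Longrightarrow> ballot k (Suc n) = binomi (Suc (2 * n)) (a + 1) - binomi (Suc (2 * n)) a"
  by (auto simp: algebra_simps)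

lemma ballot_Suc_Suc: "ballot (Suc j) (Suc n) = ballot j n + 2 * ballot (Suc j) n + ballot (Suc (Suc j)) n"
proof (cases n)
  case 0
  then show ?thesis by (cases j) (simp_all add: binomi_def)
next
  case (Suc m)
  define a where "a = int m - int j"
  let ?B = "binomi (Suc (2 * m))"
  have "ballot (Suc j) (Suc n) = binomi (Suc (Suc (Suc (2 * m)))) (a + 1) - binomi (Suc (Suc (Suc (2 * m)))) a"
    using ballot_Suc_eq[of n "Suc j" a] by (simp add: Suc a_def)
  also have "\<dots> = ?B (a + 1) + ?B a - ?B (a - 1) - ?B (a - 2)"
    by (simp add: binomi_Suc algebra_simps)
  also have "\<dots> = (?B (a + 1) - ?B a) + 2 * (?B a - ?B (a - 1)) + (?B (a - 1) - ?B (a - 2))"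
    by simp
  also have "\<dots> = ballot j n + 2 * ballot (Suc j) n + ballot (Suc (Suc j)) n"
    using ballot_Suc_eq[of m j a] ballot_Suc_eq[of m "Suc j" "a - 1"] ballot_Suc_eq[of m "Suc (Suc j)" "a - 2"]
    by (simp add: Suc a_def)
  finally show ?thesis .
qed

lemma U_power_nth: "(U ^ k) $ n = ballot k n"
proof (induction n arbitrary: k)
  case 0
  then show ?case by (simp add: fps_power_zeroth U_nth_0)
next
  case (Suc n)
  show ?case
  proof (cases k)
    case 0
    have "Suc (2 * n) choose Suc n = Suc (2 * n) choose n"
      using binomial_symmetric[of n "Suc (2 * n)"] by (simp del: binomial_Suc_Suc)
    with 0 show ?thesis
      by (simp add: binomi_def nat_add_distrib del: binomial_Suc_Suc)
  next
    case (Suc j)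
    have "U ^ Suc j = U ^ j * (fps_X * (1 + U)\<^sup>2)"
      by (simp only: U_fixpoint power_Suc2)
    also have "\<dots> = fps_X * (U ^ j + U ^ Suc j + U ^ Suc j + U ^ Suc (Suc j))"
      by (simp add: algebra_simps power2_eq_square)
    finally have "(U ^ k) $ Suc n = (fps_X * (U ^ j + U ^ Suc j + U ^ Suc j + U ^ Suc (Suc j))) $ Suc n"
      unfolding Suc by (rule arg_cong)
    also have "\<dots> = (U ^ j + U ^ Suc j + U ^ Suc j + U ^ Suc (Suc j)) $ n"
      by (simp only: fps_X_mult_nth) simp
    also have "\<dots> = ballot j n + 2 * ballot (Suc j) n + ballot (Suc (Suc j)) n"
      by (simp only: fps_add_nth Suc.IH)
    finally show ?thesis
      by (simp only: Suc ballot_Suc_Suc)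
  qed
qed

lemma fps_nth_eq_0_if_mult_eq_X_power_mult:
  fixes F G H :: "'a::idom fps"
  assumes FG: "F * G = fps_X ^ m * H" and G: "G $ 0 \<noteq> 0" and n: "n < m"
  shows "F $ n = 0"
proof (cases "F = 0")
  case False
  have "G \<noteq> 0"
    using G by auto
  with False FG have "H \<noteq> 0"
    by auto
  have "subdegree F = subdegree (F * G)"
    using False \<open>G \<noteq> 0\<close> G by simp
  also have "\<dots> = subdegree H + m"
    using \<open>H \<noteq> 0\<close> by (simp add: FG fps_subdegree_mult_fps_X_power(1))
  finally show ?thesis
    using n by (intro nth_less_subdegree_zero) simp
qed simp

lemma arith_geometric_sum:
  fixes w :: "'a::comm_ring_1"
  shows "(1 - w)\<^sup>2 * (\<Sum>i<N. of_nat (Suc i) * w ^ i) = 1 - of_nat (Suc N) * w ^ N + of_nat N * w ^ Suc N"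
  by (induction N) (simp_all add: algebra_simps power2_eq_square)

text \<open>Only the terms with \<open>l \<le> n + 1\<close> of the expansion of the closed form reach the coefficient
  of \<open>z^n\<close>, since \<open>U^m = O(z^m)\<close>.\<close>

lemma branches_gf_nth_ballot:
  "branches_gf r $ n = (\<Sum>i\<le>n. int (Suc i) * (ballot (Suc i * 2 ^ r - 1) n - ballot (Suc i * 2 ^ r + 1) n))"
proof -
  obtain k where k: "2 ^ r = Suc k"
    using not0_implies_Suc[of "2 ^ r"] by auto
  define w where "w = U ^ Suc k"
  define c where "c = (1 - U\<^sup>2) * U ^ k"
  define S where "S = (\<Sum>i<Suc n. of_nat (Suc i) * w ^ i)"
  have term_eq: "U ^ (Suc i * Suc k - 1) - U ^ (Suc i * Suc k + 1) = c * w ^ i" for i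
  proof -
    have "Suc i * Suc k - 1 = k + Suc k * i" "Suc i * Suc k + 1 = k + Suc k * i + 2"
      by simp_all
    then show ?thesis
      unfolding c_def w_def by (simp only: power_add power_mult) (simp add: algebra_simps)
  qed
  have "w ^ Suc n = (fps_X * (1 + U)\<^sup>2) ^ (Suc k * Suc n)"
    unfolding w_def U_fixpoint by (simp only: power_mult)
  then have w_power: "w ^ Suc n = fps_X ^ (Suc k * Suc n) * (1 + U) ^ (2 * (Suc k * Suc n))"
    by (simp only: power_mult_distrib power_mult)
  have "(branches_gf r - c * S) * (1 - w)\<^sup>2 = c - c * ((1 - w)\<^sup>2 * S)"
    using branches_gf_closed_form[of r] unfolding k w_def c_def by (simp add: algebra_simps)
  also have "\<dots> = w ^ Suc n * (c * (of_nat (Suc (Suc n)) - of_nat (Suc n) * w))"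
    unfolding S_def arith_geometric_sum by (simp add: algebra_simps)
  also have "\<dots> = fps_X ^ (Suc k * Suc n) *
      ((1 + U) ^ (2 * (Suc k * Suc n)) * (c * (of_nat (Suc (Suc n)) - of_nat (Suc n) * w)))"
    by (simp only: w_power mult.assoc)
  finally have "(branches_gf r - c * S) $ n = 0"
    by (rule fps_nth_eq_0_if_mult_eq_X_power_mult) (simp_all add: w_def fps_power_zeroth U_nth_0)
  then have "branches_gf r $ n = (c * S) $ n"
    by simp
  also have "c * S = (\<Sum>i\<le>n. of_nat (Suc i) * (U ^ (Suc i * 2 ^ r - 1) - U ^ (Suc i * 2 ^ r + 1)))"
    unfolding S_def k term_eq by (simp add: lessThan_Suc_atMost sum_distrib_left algebra_simps)
  finally show ?thesis
    by (simp only: fps_sum_nth fps_mult_left_const_nth fps_sub_nth U_power_nth flip: fps_of_nat)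
qed

lemma ballot_diff:
  assumes "k \<ge> 1"
  shows "ballot (k - 1) n - ballot (k + 1) n =
    binomi (2 * n) (int n + 1 - int k) - 2 * binomi (2 * n) (int n - int k) + binomi (2 * n) (int n - 1 - int k)"
proof (cases n)
  case 0
  with assms show ?thesis
    by (cases "k = 1") (simp_all add: binomi_def)
next
  case (Suc m)
  define a where "a = int m + 1 - int k"
  let ?B = "binomi (Suc (2 * m))"
  have "ballot (k - 1) n = ?B (a + 1) - ?B a" "ballot (k + 1) n = ?B (a - 1) - ?B (a - 2)"
    using assms ballot_Suc_eq[of m "k - 1" a] ballot_Suc_eq[of m "k + 1" "a - 2"]
    by (simp_all add: Suc a_def of_nat_diff)
  moreover have "binomi (2 * n) j = ?B (j - 1) + ?B j" for j
    using binomi_Suc[of "Suc (2 * m)" j] by (simp add: Suc)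
  moreover have "int n + 1 - int k = a + 1" "int n - int k = a" "int n - 1 - int k = a - 1"
    by (simp_all add: Suc a_def)
  ultimately show ?thesis
    by (simp add: algebra_simps)
qed

lemma branches_gf_nth:
  "branches_gf r $ n = (\<Sum>l\<in>{1..n+1}. int l *
     (binomi (2 * n) (int n + 1 - int l * 2 ^ r) - 2 * binomi (2 * n) (int n - int l * 2 ^ r)
      + binomi (2 * n) (int n - 1 - int l * 2 ^ r)))"
proof -
  define E where "E l = binomi (2 * n) (int n + 1 - int l * 2 ^ r)
    - 2 * binomi (2 * n) (int n - int l * 2 ^ r) + binomi (2 * n) (int n - 1 - int l * 2 ^ r)" for l
  have "ballot (Suc i * 2 ^ r - 1) n - ballot (Suc i * 2 ^ r + 1) n = E (Suc i)" for i
  proof -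
    have "1 \<le> Suc i * 2 ^ r"
      by (simp add: Suc_le_eq)
    from ballot_diff[OF this] show ?thesis
      by (simp add: E_def distrib_right)
  qed
  then have "branches_gf r $ n = (\<Sum>i\<le>n. int (Suc i) * E (Suc i))"
    by (simp only: branches_gf_nth_ballot)
  also have "\<dots> = (\<Sum>l\<in>{Suc 0..Suc n}. int l * E l)"
    by (simp only: sum.shift_bounds_cl_Suc_ivl atLeast0AtMost)
  finally show ?thesis
    by (simp add: E_def)
qed

lemma central_binomial_Suc: "(2 * Suc m) choose Suc m = 2 * (Suc (2 * m) choose m)"
proof -
  have "Suc (2 * m) choose Suc m = Suc (2 * m) choose m"
    using binomial_symmetric[of m "Suc (2 * m)"] by simp
  then show ?thesis
    by simp
qed

lemma Suc_Suc_times_binomi_pred: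
  "int (Suc (Suc m)) * binomi (Suc (2 * m)) (int m - 1) = int m * int (Suc (2 * m) choose m)"
proof (cases m)
  case (Suc p)
  have N: "Suc (p + Suc m) = Suc (2 * m)"
    using Suc by simp
  have "m * (Suc (2 * m) choose m) = Suc (Suc m) * (Suc (2 * m) choose p)"
    using Suc_times_binomial_add[of p "Suc (Suc p)"] unfolding Suc[symmetric] N .
  moreover have "binomi (Suc (2 * m)) (int m - 1) = int (Suc (2 * m) choose p)"
    by (simp add: Suc binomi_def del: binomial_Suc_Suc)
  ultimately show ?thesis
    by (simp only: flip: of_nat_mult)
qed (simp add: binomi_def)

lemma card_trees_of_size: "(int n + 1) * int (card (trees_of_size n)) = int ((2 * n) choose n)"
proof (cases n)
  case 0
  then show ?thesis by (simp add: trees_of_size_0)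
next
  case (Suc m)
  let ?C = "int (Suc (2 * m) choose m)" and ?b = "binomi (Suc (2 * m)) (int m - 1)"
  have "int (card (trees_of_size n)) = (1 + U) $ n"
    by (simp flip: tree_gf_one)
  also have "\<dots> = ballot 1 n"
    using U_power_nth[of 1 n] by (simp add: Suc)
  also have "\<dots> = ?C - ?b"
    by (simp add: Suc binomi_def)
  finally have "(int n + 1) * int (card (trees_of_size n)) = int (Suc (Suc m)) * ?C - int (Suc (Suc m)) * ?b"
    by (simp only: Suc) (simp add: algebra_simps)
  also have "\<dots> = 2 * ?C"
    unfolding Suc_Suc_times_binomi_pred by (simp add: algebra_simps)
  finally show ?thesis
    using central_binomial_Suc[of m] by (simp add: Suc del: binomial_Suc_Suc)
qed

theorem proposition3:
  fixes n r :: nat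
  shows "expected_branches n r =
    real (n + 1) / real ((2 * n) choose n) *
    (\<Sum>l\<in>{1..n+1}. real l *
       real_of_int (binomi (2 * n) (int n + 1 - int l * 2 ^ r)
                    - 2 * binomi (2 * n) (int n - int l * 2 ^ r)
                    + binomi (2 * n) (int n - 1 - int l * 2 ^ r)))"
proof -
  have "(\<Sum>t\<in>trees_of_size n. real (num_branches t r)) = real_of_int (branches_gf r $ n)"
    by (simp add: num_branches_eq_branch_count branches_gf_def)
  also have "\<dots> = (\<Sum>l\<in>{1..n+1}. real l *
       real_of_int (binomi (2 * n) (int n + 1 - int l * 2 ^ r)
                    - 2 * binomi (2 * n) (int n - int l * 2 ^ r)
                    + binomi (2 * n) (int n - 1 - int l * 2 ^ r)))"
    by (simp add: branches_gf_nth)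
  moreover have "real (card (trees_of_size n)) = real ((2 * n) choose n) / real (n + 1)"
    using arg_cong[OF card_trees_of_size[of n], of real_of_int] by (simp add: field_simps)
  ultimately show ?thesis
    unfolding expected_branches_def by simp
qed

end
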